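(* Let $A \in \mathbb{C}^{N \times N}$ have an orthonormal basis of eigenvectors $\psi_1,\ldots,\psi_N$ with eigenvalues $\lambda_1,\ldots,\lambda_N$ ordered so that $|\lambda_1| > |\lambda_2| \ge |\lambda_3| \ge \cdots \ge |\lambda_N|$. Let $v \in \mathbb{C}^N$ with $\|v\| = 1$, let $e \in \mathbb{C}^N$ be arbitrary, and let $\theta = \measuredangle(v,\psi_1)$. If $$\frac{\|e\|}{|\lambda_1|} < \left(1 - \left|\frac{\lambda_2}{\lambda_1}\right|\right)\frac{\cos(\theta)\sin(\theta)}{\cos(\theta)+\sin(\theta)},$$ then $\measuredangle(Av+e,\psi_1) < \measuredangle(v,\psi_1)$.
   Context: $\|\cdot\|$ is the Euclidean norm. For nonzero $x,y \in \mathbb{C}^N$, the angle $\measuredangle(x,y)\in[0,\pi/2]$ is defined by $\cos\measuredangle(x,y) = |\langle x, y\rangle|/(\|x\|\,\|y\|)$; equivalently, with $\mathcal{P} = \psi_1\psi_1^{*}$ and $\mathcal{P}_\perp = I - \mathcal{P}$, one has $\tan\measuredangle(x,\psi_1) = \|\mathcal{P}_\perp x\|/\|\mathcal{P} x\|$. The vector $e$ models an arbitrary perturbation (e.g. a truncation error) of the product $Av$ in one step of inexact power iteration. *)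

theory Defs
  imports "HOL-Analysis.Analysis"
begin

definition cinner :: "complex ^ 'n \<Rightarrow> complex ^ 'n \<Rightarrow> complex" where
  "cinner x y = (\<Sum>i\<in>UNIV. cnj (x $ i) * y $ i)"

definition vangle :: "complex ^ 'n \<Rightarrow> complex ^ 'n \<Rightarrow> real" where
  "vangle x y = arccos (cmod (cinner x y) / (norm x * norm y))"

end

theory Submission
  imports Defs
begin

text \<open>Split every vector into its component along \<open>psi 0\<close> and its component orthogonal to it.
  Since \<open>A\<close> is diagonal in the orthonormal eigenbasis, the parallel component of \<open>A v\<close> is
  \<open>lam 0\<close> times that of \<open>v\<close>, while the norm of the orthogonal one is multiplied by at most \<open>\<bar>lam 1\<bar>\<close>.
  Adding \<open>e\<close> moves each component by at most \<open>\<parallel>e\<parallel>\<close>, so with \<open>c = cos \<theta>\<close>, \<open>s = sin \<theta>\<close> the tangent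
  of the new angle is at most \<open>(\<bar>lam 1\<bar> s + \<parallel>e\<parallel>) / (\<bar>lam 0\<bar> c - \<parallel>e\<parallel>)\<close>; the smallness hypothesis
  is exactly the condition that this is below \<open>s / c = tan \<theta>\<close>.\<close>

lemma cinner_add_right: "cinner x (y + z) = cinner x y + cinner x z"
  by (simp add: cinner_def distrib_left sum.distrib)

lemma cinner_add_left: "cinner (x + y) z = cinner x z + cinner y z"
  by (simp add: cinner_def distrib_right sum.distrib)

lemma cinner_zero_right [simp]: "cinner x 0 = 0"
  by (simp add: cinner_def)

lemma cinner_zero_left [simp]: "cinner 0 x = 0"
  by (simp add: cinner_def)

lemma cinner_diff_right: "cinner x (y - z) = cinner x y - cinner x z"
  by (simp add: cinner_def right_diff_distrib sum_subtractf)

lemma cinner_scale_right: "cinner x (c *s y) = c * cinner x y"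
  by (simp add: cinner_def sum_distrib_left algebra_simps)

lemma cinner_scale_left: "cinner (c *s x) y = cnj c * cinner x y"
  by (simp add: cinner_def sum_distrib_left algebra_simps)

lemma cinner_sum_right: "cinner x (\<Sum>k\<in>S. f k) = (\<Sum>k\<in>S. cinner x (f k))"
  by (induction S rule: infinite_finite_induct) (simp_all add: cinner_add_right)

lemma cinner_sum_left: "cinner (\<Sum>k\<in>S. f k) x = (\<Sum>k\<in>S. cinner (f k) x)"
  by (induction S rule: infinite_finite_induct) (simp_all add: cinner_add_left)

lemma cinner_commute: "cinner y x = cnj (cinner x y)"
  by (simp add: cinner_def mult.commute)

lemma cinner_self: "cinner x x = complex_of_real (norm x ^ 2)"
proof -
  have "norm x ^ 2 = (\<Sum>i\<in>UNIV. cmod (x $ i) ^ 2)"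
    unfolding norm_vec_def L2_set_def by (simp add: sum_nonneg)
  also have "complex_of_real \<dots> = (\<Sum>i\<in>UNIV. cnj (x $ i) * x $ i)"
    by (simp add: complex_norm_square[symmetric] mult.commute)
  finally show ?thesis
    unfolding cinner_def by simp
qed

definition proj_perp :: "complex ^ 'n \<Rightarrow> complex ^ 'n \<Rightarrow> complex ^ 'n" where
  "proj_perp u x = x - cinner u x *s u"

lemma proj_perp_add: "proj_perp u (x + y) = proj_perp u x + proj_perp u y"
  by (simp add: proj_perp_def cinner_add_right vector_sadd_rdistrib)

lemma norm_pythagoras_proj:
  assumes "norm u = 1"
  shows "norm x ^ 2 = cmod (cinner u x) ^ 2 + norm (proj_perp u x) ^ 2"
proof -
  define a where "a = cinner u x"
  define p where "p = proj_perp u x"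
  have uu: "cinner u u = 1"
    using assms by (simp add: cinner_self)
  have up: "cinner u p = 0" and pu: "cinner p u = 0"
    using cinner_commute[of p u]
    by (simp_all add: p_def a_def proj_perp_def cinner_diff_right cinner_scale_right uu)
  have "complex_of_real (norm x ^ 2) = cinner (p + a *s u) (p + a *s u)"
    by (simp add: cinner_self p_def a_def proj_perp_def)
  also have "\<dots> = cinner p p + cnj a * a"
    by (simp add: cinner_add_left cinner_add_right cinner_scale_left cinner_scale_right up pu uu)
  also have "\<dots> = complex_of_real (norm p ^ 2 + cmod a ^ 2)"
    by (simp add: cinner_self complex_norm_square[symmetric] mult.commute)
  finally show ?thesis
    unfolding p_def a_def by (simp only: of_real_eq_iff add.commute)
qed

lemma cmod_cinner_le_norm:
  assumes "norm u = 1"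
  shows "cmod (cinner u x) \<le> norm x"
proof (rule power2_le_imp_le)
  show "cmod (cinner u x) ^ 2 \<le> norm x ^ 2"
    using norm_pythagoras_proj[OF assms, of x] by simp
qed simp

lemma norm_proj_perp_le:
  assumes "norm u = 1"
  shows "norm (proj_perp u x) \<le> norm x"
proof (rule power2_le_imp_le)
  show "norm (proj_perp u x) ^ 2 \<le> norm x ^ 2"
    using norm_pythagoras_proj[OF assms, of x] by simp
qed simp

lemma cmod_cinner_div_norm_bounds:
  assumes "norm u = 1"
  shows "-1 \<le> cmod (cinner u x) / norm x" "cmod (cinner u x) / norm x \<le> 1"
proof -
  have "0 \<le> cmod (cinner u x) / norm x"
    by simp
  then show "-1 \<le> cmod (cinner u x) / norm x"
    by linarith
  show "cmod (cinner u x) / norm x \<le> 1"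
    using cmod_cinner_le_norm[OF assms, of x] by (auto simp: divide_le_eq_1)
qed

lemma vangle_unit_right:
  assumes "norm u = 1"
  shows "vangle x u = arccos (cmod (cinner u x) / norm x)"
  using assms by (simp add: vangle_def cinner_commute[of x u])

lemma cos_vangle_unit_right:
  assumes "norm u = 1" "x \<noteq> 0"
  shows "cos (vangle x u) = cmod (cinner u x) / norm x"
  using cos_arccos[OF cmod_cinner_div_norm_bounds[OF assms(1)]]
  by (simp add: vangle_unit_right[OF assms(1)])

lemma sin_vangle_unit_right:
  assumes "norm u = 1" "x \<noteq> 0"
  shows "sin (vangle x u) = norm (proj_perp u x) / norm x"
proof -
  have "sin (vangle x u) = sqrt (1 - (cmod (cinner u x) / norm x) ^ 2)"
    using sin_arccos[OF cmod_cinner_div_norm_bounds[OF assms(1)]]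
    by (simp add: vangle_unit_right[OF assms(1)])
  also have "1 - (cmod (cinner u x) / norm x) ^ 2 = (norm x ^ 2 - cmod (cinner u x) ^ 2) / norm x ^ 2"
    using assms(2) by (simp add: power_divide diff_divide_distrib)
  also have "norm x ^ 2 - cmod (cinner u x) ^ 2 = norm (proj_perp u x) ^ 2"
    using norm_pythagoras_proj[OF assms(1), of x] by simp
  also have "norm (proj_perp u x) ^ 2 / norm x ^ 2 = (norm (proj_perp u x) / norm x) ^ 2"
    by (simp add: power_divide)
  finally show ?thesis
    by simp
qed

text \<open>The cross-multiplied form of \<open>tan (vangle x u) < tan (vangle y u)\<close>, which needs no
  nonvanishing hypotheses: it already forces \<open>x\<close> and \<open>y\<close> to be nonzero.\<close>
lemma vangle_less_vangle:
  assumes u: "norm u = 1"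
    and tan_less: "norm (proj_perp u x) * cmod (cinner u y) < norm (proj_perp u y) * cmod (cinner u x)"
  shows "vangle x u < vangle y u"
proof -
  define a where "a = cmod (cinner u x)"
  define b where "b = norm (proj_perp u x)"
  define c where "c = cmod (cinner u y)"
  define d where "d = norm (proj_perp u y)"
  have x: "norm x ^ 2 = a ^ 2 + b ^ 2" and y: "norm y ^ 2 = c ^ 2 + d ^ 2"
    unfolding a_def b_def c_def d_def by (rule norm_pythagoras_proj[OF u])+
  have bc_less: "b * c < d * a"
    using tan_less unfolding a_def b_def c_def d_def .
  have nonneg: "0 \<le> a" "0 \<le> b" "0 \<le> c" "0 \<le> d"
    unfolding a_def b_def c_def d_def by simp_all
  then have "0 < d * a"
    using bc_less mult_nonneg_nonneg[of b c] by linarith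
  then have "0 < a" "0 < d"
    using nonneg by (simp_all add: zero_less_mult_iff)
  then have "x \<noteq> 0" "y \<noteq> 0"
    unfolding a_def d_def proj_perp_def by auto
  then have pos: "0 < norm x" "0 < norm y"
    by simp_all
  have "(c * norm x) ^ 2 < (a * norm y) ^ 2"
  proof -
    have "(c * norm x) ^ 2 = c ^ 2 * a ^ 2 + (b * c) ^ 2"
      by (simp add: x power_mult_distrib algebra_simps)
    also have "\<dots> < c ^ 2 * a ^ 2 + (d * a) ^ 2"
      using bc_less nonneg by (simp add: power_strict_mono)
    also have "\<dots> = (a * norm y) ^ 2"
      by (simp add: y power_mult_distrib algebra_simps)
    finally show ?thesis .
  qed
  then have "c * norm x < a * norm y"
    using nonneg by (simp add: power_less_imp_less_base)
  then have "c / norm y < a / norm x"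
    using pos by (simp add: field_simps)
  moreover have "0 \<le> c / norm y" "a / norm x \<le> 1"
    using cmod_cinner_div_norm_bounds[OF u, of x] nonneg unfolding a_def by simp_all
  ultimately have "arccos (a / norm x) < arccos (c / norm y)"
    by (intro arccos_less_arccos) simp_all
  then show ?thesis
    by (simp only: vangle_unit_right[OF u] a_def c_def)
qed

lemma cinner_orthonormal_sum:
  fixes psi :: "nat \<Rightarrow> complex ^ 'n"
  assumes orth: "\<And>i j. i < N \<Longrightarrow> j < N \<Longrightarrow> cinner (psi i) (psi j) = (if i = j then 1 else 0)"
    and S: "S \<subseteq> {..<N}" and m: "m \<in> S"
  shows "cinner (psi m) (\<Sum>k\<in>S. al k *s psi k) = al m"
proof -
  have "cinner (psi m) (\<Sum>k\<in>S. al k *s psi k) = (\<Sum>k\<in>S. if m = k then al k else 0)"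
    using S m by (intro trans[OF cinner_sum_right] sum.cong) (auto simp: cinner_scale_right orth subset_iff)
  also have "\<dots> = al m"
    using finite_subset[OF S] m by simp
  finally show ?thesis .
qed

lemma norm_orthonormal_sum:
  fixes psi :: "nat \<Rightarrow> complex ^ 'n"
  assumes orth: "\<And>i j. i < N \<Longrightarrow> j < N \<Longrightarrow> cinner (psi i) (psi j) = (if i = j then 1 else 0)"
    and S: "S \<subseteq> {..<N}"
  shows "norm (\<Sum>k\<in>S. al k *s psi k) ^ 2 = (\<Sum>k\<in>S. cmod (al k) ^ 2)"
proof -
  have "complex_of_real (norm (\<Sum>k\<in>S. al k *s psi k) ^ 2)
      = cinner (\<Sum>k\<in>S. al k *s psi k) (\<Sum>k\<in>S. al k *s psi k)"
    by (simp only: cinner_self)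
  also have "\<dots> = (\<Sum>k\<in>S. cnj (al k) * cinner (psi k) (\<Sum>k\<in>S. al k *s psi k))"
    by (simp add: cinner_sum_left cinner_scale_left)
  also have "\<dots> = (\<Sum>k\<in>S. complex_of_real (cmod (al k) ^ 2))"
    by (rule sum.cong) (simp_all add: cinner_orthonormal_sum[OF orth S] complex_norm_square[symmetric] mult.commute)
  finally show ?thesis
    by (metis of_real_eq_iff of_real_sum)
qed

lemma proj_perp_orthonormal_sum:
  fixes psi :: "nat \<Rightarrow> complex ^ 'n"
  assumes orth: "\<And>i j. i < N \<Longrightarrow> j < N \<Longrightarrow> cinner (psi i) (psi j) = (if i = j then 1 else 0)"
    and N: "0 < N"
  shows "proj_perp (psi 0) (\<Sum>k<N. al k *s psi k) = (\<Sum>k\<in>{1..<N}. al k *s psi k)"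
proof -
  have "(\<Sum>k<N. al k *s psi k) = al 0 *s psi 0 + (\<Sum>k\<in>{1..<N}. al k *s psi k)"
    using N by (simp add: lessThan_atLeast0 sum.atLeast_Suc_lessThan)
  moreover have "cinner (psi 0) (\<Sum>k<N. al k *s psi k) = al 0"
    using N by (intro cinner_orthonormal_sum[OF orth]) auto
  ultimately show ?thesis
    by (simp add: proj_perp_def)
qed

text \<open>The matrix \<open>U\<close> whose columns are the \<open>psi k\<close> satisfies \<open>U\<^sup>* U = 1\<close> by
  orthonormality; being square, also \<open>U U\<^sup>* = 1\<close>, which is the expansion.\<close>
lemma orthonormal_expansion:
  fixes psi :: "nat \<Rightarrow> complex ^ 'n"
  assumes orth: "\<And>i j. i < CARD('n) \<Longrightarrow> j < CARD('n) \<Longrightarrow>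
                   cinner (psi i) (psi j) = (if i = j then 1 else 0)"
  shows "x = (\<Sum>k<CARD('n). cinner (psi k) x *s psi k)"
proof -
  obtain g where g: "bij_betw g (UNIV :: 'n set) {0..<CARD('n)}"
    using ex_bij_betw_finite_nat[of "UNIV :: 'n set"] by auto
  then have g_less: "g k < CARD('n)" and g_eq_iff: "g k = g l \<longleftrightarrow> k = l" for k l
    by (auto simp: bij_betw_def inj_on_def)
  define U :: "complex ^ 'n ^ 'n" where "U = (\<chi> j k. psi (g k) $ j)"
  define U' :: "complex ^ 'n ^ 'n" where "U' = (\<chi> k j. cnj (psi (g k) $ j))"
  have "(U' ** U) $ k $ l = cinner (psi (g k)) (psi (g l))" for k l
    by (simp add: matrix_matrix_mult_def U_def U'_def cinner_def)
  then have "U' ** U = mat 1"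
    by (simp add: vec_eq_iff mat_def orth g_less g_eq_iff)
  then have "U ** U' = mat 1"
    by (simp add: matrix_left_right_inverse)
  have expand: "x $ j = (\<Sum>k\<in>UNIV. cinner (psi (g k)) x * psi (g k) $ j)" for j
  proof -
    have "x $ j = (U *v (U' *v x)) $ j"
      using \<open>U ** U' = mat 1\<close> by (simp add: matrix_vector_mul_assoc)
    also have "\<dots> = (\<Sum>k\<in>UNIV. cinner (psi (g k)) x * psi (g k) $ j)"
      by (simp add: matrix_vector_mult_def U_def U'_def cinner_def mult.commute)
    finally show ?thesis .
  qed
  have reindex: "(\<Sum>k\<in>UNIV. cinner (psi (g k)) x * psi (g k) $ j)
      = (\<Sum>k<CARD('n). cinner (psi k) x * psi k $ j)" for j
    using sum.reindex_bij_betw[OF g, of "\<lambda>k. cinner (psi k) x * psi k $ j"]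
    by (simp add: lessThan_atLeast0)
  show ?thesis
    using expand reindex by (simp add: vec_eq_iff sum_component)
qed

lemma matrix_vector_mult_sum: "A *v (\<Sum>k\<in>S. f k) = (\<Sum>k\<in>S. A *v f k)"
  by (induction S rule: infinite_finite_induct) (simp_all add: matrix_vector_right_distrib)

locale orthonormal_eigenbasis =
  fixes A :: "complex ^ 'n ^ 'n"
    and psi :: "nat \<Rightarrow> complex ^ 'n"
    and lam :: "nat \<Rightarrow> complex"
  assumes orthonormal: "\<And>i j. i < CARD('n) \<Longrightarrow> j < CARD('n) \<Longrightarrow>
                          cinner (psi i) (psi j) = (if i = j then 1 else 0)"
    and eigen: "\<And>i. i < CARD('n) \<Longrightarrow> A *v psi i = lam i *s psi i"
begin

lemma norm_psi:
  assumes "k < CARD('n)"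
  shows "norm (psi k) = 1"
proof -
  have "norm (psi k) ^ 2 = 1"
    using orthonormal[OF assms assms] by (metis cinner_self of_real_eq_1_iff)
  then show ?thesis
    using norm_ge_zero[of "psi k"] by (auto simp: power2_eq_1_iff)
qed

lemma mult_eigenbasis_expansion:
  "A *v x = (\<Sum>k<CARD('n). (lam k * cinner (psi k) x) *s psi k)"
proof -
  have "A *v x = A *v (\<Sum>k<CARD('n). cinner (psi k) x *s psi k)"
    by (rule arg_cong[where f = "(*v) A"]) (rule orthonormal_expansion[OF orthonormal])
  also have "\<dots> = (\<Sum>k<CARD('n). A *v (cinner (psi k) x *s psi k))"
    by (rule matrix_vector_mult_sum)
  also have "\<dots> = (\<Sum>k<CARD('n). (lam k * cinner (psi k) x) *s psi k)"
    by (intro sum.cong) (simp_all add: vector_scalar_commute eigen mult.commute)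
  finally show ?thesis .
qed

lemma cinner_psi_mult:
  assumes "m < CARD('n)"
  shows "cinner (psi m) (A *v x) = lam m * cinner (psi m) x"
  unfolding mult_eigenbasis_expansion using assms
  by (intro cinner_orthonormal_sum[OF orthonormal]) auto

lemma norm_proj_perp_psi0:
  "norm (proj_perp (psi 0) x) ^ 2 = (\<Sum>k\<in>{1..<CARD('n)}. cmod (cinner (psi k) x) ^ 2)"
proof -
  have "proj_perp (psi 0) x = proj_perp (psi 0) (\<Sum>k<CARD('n). cinner (psi k) x *s psi k)"
    by (rule arg_cong[where f = "proj_perp (psi 0)"]) (rule orthonormal_expansion[OF orthonormal])
  also have "\<dots> = (\<Sum>k\<in>{1..<CARD('n)}. cinner (psi k) x *s psi k)"
    by (rule proj_perp_orthonormal_sum[OF orthonormal]) (auto simp: finite_UNIV_card_ge_0)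
  finally have "norm (proj_perp (psi 0) x) ^ 2 = norm (\<Sum>k\<in>{1..<CARD('n)}. cinner (psi k) x *s psi k) ^ 2"
    by (rule arg_cong)
  also have "\<dots> = (\<Sum>k\<in>{1..<CARD('n)}. cmod (cinner (psi k) x) ^ 2)"
    by (rule norm_orthonormal_sum[OF orthonormal]) auto
  finally show ?thesis .
qed

lemma norm_proj_perp_mult_le:
  assumes lam_le: "\<And>k. 1 \<le> k \<Longrightarrow> k < CARD('n) \<Longrightarrow> cmod (lam k) \<le> L"
    and "0 \<le> L"
  shows "norm (proj_perp (psi 0) (A *v x)) \<le> L * norm (proj_perp (psi 0) x)"
proof -
  have "norm (proj_perp (psi 0) (A *v x)) ^ 2
      = (\<Sum>k\<in>{1..<CARD('n)}. cmod (lam k) ^ 2 * cmod (cinner (psi k) x) ^ 2)"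
    by (simp add: norm_proj_perp_psi0 cinner_psi_mult norm_mult power_mult_distrib)
  also have "\<dots> \<le> (\<Sum>k\<in>{1..<CARD('n)}. L ^ 2 * cmod (cinner (psi k) x) ^ 2)"
    using lam_le \<open>0 \<le> L\<close> by (intro sum_mono mult_right_mono power_mono) auto
  also have "\<dots> = (L * norm (proj_perp (psi 0) x)) ^ 2"
    by (simp add: norm_proj_perp_psi0 power_mult_distrib sum_distrib_left)
  finally show ?thesis
    by (rule power2_le_imp_le) (simp add: \<open>0 \<le> L\<close>)
qed

end

text \<open>For \<open>c + s > 0\<close> the smallness hypothesis says \<open>(L1 s + \<epsilon>) c < (L0 c - \<epsilon>) s\<close>; for
  \<open>c + s = 0\<close> the junk value \<open>c s / 0 = 0\<close> makes it contradict \<open>0 \<le> \<epsilon>\<close>.\<close>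
lemma perturbed_tan_less:
  fixes L0 L1 \<epsilon> c s a b :: real
  assumes "0 < L0" "0 \<le> \<epsilon>" "0 \<le> c" "0 \<le> s"
    and b: "b \<le> L1 * s + \<epsilon>" and a: "L0 * c - \<epsilon> \<le> a"
    and small: "\<epsilon> / L0 < (1 - L1 / L0) * (c * s / (c + s))"
  shows "b * c < s * a"
proof -
  have "0 < c + s"
  proof (rule ccontr)
    assume "\<not> 0 < c + s"
    then have "c + s = 0"
      using \<open>0 \<le> c\<close> \<open>0 \<le> s\<close> by linarith
    then show False
      using small \<open>0 < L0\<close> \<open>0 \<le> \<epsilon>\<close> by (simp add: divide_less_0_iff)
  qed
  define t where "t = c * s / (c + s)"
  have "\<epsilon> = L0 * (\<epsilon> / L0)"
    using \<open>0 < L0\<close> by simp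
  also have "\<dots> < L0 * ((1 - L1 / L0) * t)"
    using small \<open>0 < L0\<close> unfolding t_def by (rule mult_strict_left_mono)
  also have "\<dots> = (L0 - L1) * t"
    using \<open>0 < L0\<close> by (simp add: field_simps)
  finally have "\<epsilon> < (L0 - L1) * (c * s) / (c + s)"
    by (simp add: t_def)
  then have "\<epsilon> * (c + s) < (L0 - L1) * (c * s)"
    using \<open>0 < c + s\<close> by (simp add: less_divide_eq)
  then have "(L1 * s + \<epsilon>) * c < s * (L0 * c - \<epsilon>)"
    by (simp add: algebra_simps)
  moreover have "b * c \<le> (L1 * s + \<epsilon>) * c" "s * (L0 * c - \<epsilon>) \<le> s * a"
    using a b \<open>0 \<le> c\<close> \<open>0 \<le> s\<close> by (simp_all add: mult_right_mono mult_left_mono)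
  ultimately show ?thesis
    by linarith
qed

theorem theorem2:
  fixes A :: "complex ^ 'n ^ 'n"
    and psi :: "nat \<Rightarrow> complex ^ 'n"
    and lam :: "nat \<Rightarrow> complex"
    and v e :: "complex ^ 'n"
  assumes N2: "CARD('n) \<ge> 2"
    and orthonormal: "\<And>i j. i < CARD('n) \<Longrightarrow> j < CARD('n) \<Longrightarrow>
                         cinner (psi i) (psi j) = (if i = j then 1 else 0)"
    and eigen: "\<And>i. i < CARD('n) \<Longrightarrow> A *v psi i = lam i *s psi i"
    and dominant: "cmod (lam 0) > cmod (lam 1)"
    and ordered: "\<And>i j. 1 \<le> i \<Longrightarrow> i \<le> j \<Longrightarrow> j < CARD('n) \<Longrightarrow> cmod (lam j) \<le> cmod (lam i)"
    and v_unit: "norm v = 1"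
    and small: "norm e / cmod (lam 0)
                 < (1 - cmod (lam 1 / lam 0)) *
                   (cos (vangle v (psi 0)) * sin (vangle v (psi 0)) /
                    (cos (vangle v (psi 0)) + sin (vangle v (psi 0))))"
  shows "vangle (A *v v + e) (psi 0) < vangle v (psi 0)"
proof -
  interpret orthonormal_eigenbasis A psi lam
    using orthonormal eigen by unfold_locales
  have u: "norm (psi 0) = 1"
    using N2 by (intro norm_psi) simp
  have "v \<noteq> 0"
    using v_unit by auto
  have cos_sin: "cos (vangle v (psi 0)) = cmod (cinner (psi 0) v)"
      "sin (vangle v (psi 0)) = norm (proj_perp (psi 0) v)"
    using cos_vangle_unit_right[OF u \<open>v \<noteq> 0\<close>] sin_vangle_unit_right[OF u \<open>v \<noteq> 0\<close>] v_unit
    by simp_all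
  have parallel: "cmod (lam 0) * cmod (cinner (psi 0) v) - norm e \<le> cmod (cinner (psi 0) (A *v v + e))"
    using norm_triangle_ineq2[of "lam 0 * cinner (psi 0) v" "- cinner (psi 0) e"]
      cmod_cinner_le_norm[OF u, of e] N2
    by (simp add: cinner_add_right cinner_psi_mult norm_mult)
  have "norm (proj_perp (psi 0) (A *v v)) \<le> cmod (lam 1) * norm (proj_perp (psi 0) v)"
    using ordered N2 by (intro norm_proj_perp_mult_le) auto
  then have perp: "norm (proj_perp (psi 0) (A *v v + e)) \<le> cmod (lam 1) * norm (proj_perp (psi 0) v) + norm e"
    using norm_triangle_ineq[of "proj_perp (psi 0) (A *v v)" "proj_perp (psi 0) e"]
      norm_proj_perp_le[OF u, of e]
    by (simp add: proj_perp_add)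
  have "norm (proj_perp (psi 0) (A *v v + e)) * cmod (cinner (psi 0) v)
      < norm (proj_perp (psi 0) v) * cmod (cinner (psi 0) (A *v v + e))"
    using dominant small
    by (intro perturbed_tan_less[OF _ _ _ _ perp parallel]) (auto simp: cos_sin norm_divide)
  then show ?thesis
    by (rule vangle_less_vangle[OF u])
qed

end
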